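(* For integers $n,m\ge 3$ and positive integers $q_1,\dots,q_n,r_1,\dots,r_n,s_1,\dots,s_m,p_1,\dots,p_m$, $${\rm dim}_s\big(K_{n,n}^{-M}(q_1,\dots,q_n,r_1,\dots,r_n)\diamond K_{m,m}^{-M}(s_1,\dots,s_m,p_1,\dots,p_m)\big)=\sum_{i=1}^{n}\Big((q_i+r_i)\sum_{j=1}^{m}(s_j+p_j)\Big)-nm.$$
   Context: The modular product $G\diamond H$ has vertex set $V(G)\times V(H)$; distinct vertices $(g,h)$ and $(g',h')$ are adjacent iff ($g=g'$ and $hh'\in E(H)$), or ($gg'\in E(G)$ and $h=h'$), or ($gg'\in E(G)$ and $hh'\in E(H)$), or ($g\neq g'$, $h\neq h'$, $gg'\notin E(G)$ and $hh'\notin E(H)$). $K_{n,n}^{-M}(q_1,\dots,q_n,r_1,\dots,r_n)$ is the graph whose vertex set is a disjoint union of sets $X_1,\dots,X_n,Y_1,\dots,Y_n$ with $|X_i|=q_i$, $|Y_i|=r_i$, where each $X_i$ and each $Y_i$ induces a clique, every vertex of $X_i$ is adjacent to every vertex of $Y_j$ whenever $i\neq j$, and there are no other edges. ${\rm dim}_s(X)$ is the strong metric dimension: the minimum size of $S\subseteq V(X)$ such that for all distinct $x,y$ some $z\in S$ has $d_X(y,z)=d_X(y,x)+d_X(x,z)$ or $d_X(x,z)=d_X(x,y)+d_X(y,z)$. *)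

theory Defs
  imports Main "HOL-Library.Extended_Nat"
begin

type_synonym 'a graph = "'a set \<times> ('a \<Rightarrow> 'a \<Rightarrow> bool)"

definition verts :: "'a graph \<Rightarrow> 'a set" where "verts G = fst G"
definition adj :: "'a graph \<Rightarrow> 'a \<Rightarrow> 'a \<Rightarrow> bool" where "adj G = snd G"

definition walk :: "'a graph \<Rightarrow> 'a list \<Rightarrow> bool" where
  "walk G xs \<longleftrightarrow> xs \<noteq> [] \<and> set xs \<subseteq> verts G \<and>
     (\<forall>i. Suc i < length xs \<longrightarrow> adj G (xs ! i) (xs ! Suc i))"

text \<open>Graph distance: length of a shortest walk; infinity if there is none.\<close>
definition gdist :: "'a graph \<Rightarrow> 'a \<Rightarrow> 'a \<Rightarrow> enat" where
  "gdist G x y = (INF xs \<in> {xs. walk G xs \<and> hd xs = x \<and> last xs = y}. enat (length xs - 1))"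

definition strong_resolving :: "'a graph \<Rightarrow> 'a set \<Rightarrow> bool" where
  "strong_resolving G S \<longleftrightarrow> S \<subseteq> verts G \<and>
     (\<forall>x\<in>verts G. \<forall>y\<in>verts G. x \<noteq> y \<longrightarrow>
        (\<exists>z\<in>S. gdist G y z = gdist G y x + gdist G x z \<or>
                gdist G x z = gdist G x y + gdist G y z))"

definition sdim :: "'a graph \<Rightarrow> nat" where
  "sdim G = (LEAST k. \<exists>S. strong_resolving G S \<and> card S = k)"

definition modprod :: "'a graph \<Rightarrow> 'b graph \<Rightarrow> ('a \<times> 'b) graph" where
  "modprod G H = (verts G \<times> verts H,
     \<lambda>(g,h) (g',h'). (g,h) \<noteq> (g',h') \<and>
        ((g = g' \<and> adj H h h') \<or> (adj G g g' \<and> h = h') \<or> (adj G g g' \<and> adj H h h') \<or>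
         (g \<noteq> g' \<and> h \<noteq> h' \<and> \<not> adj G g g' \<and> \<not> adj H h h')))"

text \<open>K_{n,n}^{-M}(q_1..q_n, r_1..r_n), indices shifted to 0..n-1. A vertex (False,i,k) lies
  in X_i (k < q i), a vertex (True,i,k) lies in Y_i (k < r i).\<close>
definition KM :: "nat \<Rightarrow> (nat \<Rightarrow> nat) \<Rightarrow> (nat \<Rightarrow> nat) \<Rightarrow> (bool \<times> nat \<times> nat) graph" where
  "KM n q r = ({(b,i,k). i < n \<and> k < (if b then r i else q i)},
     \<lambda>(b,i,k) (b',i',k'). (b,i,k) \<noteq> (b',i',k') \<and>
        ((b = b' \<and> i = i') \<or> (b \<noteq> b' \<and> i \<noteq> i')))"

end

theory Submission
  imports Defs
begin

text \<open>Distinct vertices ((b,i,k),(c,j,l)) and ((b',i',k'),(c',j',l')) of the product are adjacent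
  iff the truth values of "b = b' \<longleftrightarrow> i = i'" and "c = c' \<longleftrightarrow> j = j'" agree.  With n, m \<ge> 3
  the product has diameter 3, and the distance is 3 exactly for the antipodal pairs: vertices in the
  same block (same i and j) that agree in exactly one of the two sides.  Two vertices of one block
  are either antipodal, hence at the diameter, or true twins, so no third vertex strongly resolves
  them: a strong resolving set omits at most one vertex per block, i.e. at most n m vertices.
  Conversely, omitting one representative per block suffices, since for representatives x \<noteq> y
  the vertex x lies on a geodesic from y to its antipode.\<close>

lemma not_walk_Nil [simp]: "\<not> walk G []"
  by (simp add: walk_def)

lemma walk_singleton [simp]: "walk G [x] \<longleftrightarrow> x \<in> verts G"
  by (simp add: walk_def)

lemma walk_Cons_Cons [simp]:
  "walk G (x # y # xs) \<longleftrightarrow> x \<in> verts G \<and> adj G x y \<and> walk G (y # xs)"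
  by (auto simp: walk_def nth_Cons' less_Suc_eq_0_disj split: nat.splits)

lemma gdist_le_walk_length:
  "walk G xs \<Longrightarrow> hd xs = x \<Longrightarrow> last xs = y \<Longrightarrow> gdist G x y \<le> enat (length xs - 1)"
  unfolding gdist_def by (rule INF_lower2[of xs]) auto

lemma enat_le_gdistI:
  "(\<And>xs. walk G xs \<Longrightarrow> hd xs = x \<Longrightarrow> last xs = y \<Longrightarrow> k \<le> length xs - 1) \<Longrightarrow> enat k \<le> gdist G x y"
  unfolding gdist_def by (rule INF_greatest) auto

lemma gdist_self: "x \<in> verts G \<Longrightarrow> gdist G x x = 0"
  using gdist_le_walk_length[of G "[x]" x x] by (simp add: zero_enat_def[symmetric])

lemma gdist_eq_1:
  assumes "x \<in> verts G" "y \<in> verts G" "adj G x y" "x \<noteq> y"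
  shows "gdist G x y = 1"
proof (rule antisym)
  show "gdist G x y \<le> 1"
    using gdist_le_walk_length[of G "[x, y]" x y] assms by (simp add: one_enat_def)
  have "enat 1 \<le> gdist G x y"
  proof (rule enat_le_gdistI)
    fix xs assume "walk G xs" "hd xs = x" "last xs = y"
    with assms(4) show "1 \<le> length xs - 1"
      by (cases xs rule: list.exhaust; cases "tl xs"; auto)
  qed
  then show "1 \<le> gdist G x y" by (simp add: one_enat_def)
qed

lemma gdist_eq_2:
  assumes "x \<in> verts G" "w \<in> verts G" "y \<in> verts G" "adj G x w" "adj G w y"
    and "x \<noteq> y" "\<not> adj G x y"
  shows "gdist G x y = 2"
proof (rule antisym)
  show "gdist G x y \<le> 2"
    using gdist_le_walk_length[of G "[x, w, y]" x y] assms by (simp add: numeral_eq_enat numeral_2_eq_2)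
  have "enat 2 \<le> gdist G x y"
  proof (rule enat_le_gdistI)
    fix xs assume "walk G xs" "hd xs = x" "last xs = y"
    with assms(6,7) show "2 \<le> length xs - 1"
      by (cases xs rule: list.exhaust; cases "tl xs"; cases "tl (tl xs)"; auto)
  qed
  then show "2 \<le> gdist G x y" by (simp add: numeral_eq_enat)
qed

lemma gdist_eq_3:
  assumes "x \<in> verts G" "w \<in> verts G" "w' \<in> verts G" "y \<in> verts G"
    and "adj G x w" "adj G w w'" "adj G w' y"
    and "x \<noteq> y" "\<not> adj G x y" "\<And>v. \<not> (adj G x v \<and> adj G v y)"
  shows "gdist G x y = 3"
proof (rule antisym)
  show "gdist G x y \<le> 3"
    using gdist_le_walk_length[of G "[x, w, w', y]" x y] assms by (simp add: numeral_eq_enat numeral_3_eq_3)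
  have "enat 3 \<le> gdist G x y"
  proof (rule enat_le_gdistI)
    fix xs assume "walk G xs" "hd xs = x" "last xs = y"
    with assms(8-10) show "3 \<le> length xs - 1"
      by (cases xs rule: list.exhaust; cases "tl xs"; cases "tl (tl xs)"; cases "tl (tl (tl xs))";
          auto)
  qed
  then show "3 \<le> gdist G x y" by (simp add: numeral_eq_enat)
qed

lemma strong_resolving_mem_or_mem:
  assumes "strong_resolving G S" "x \<in> verts G" "y \<in> verts G" "x \<noteq> y"
    and "\<And>z. z \<in> verts G \<Longrightarrow> z \<noteq> x \<Longrightarrow> z \<noteq> y \<Longrightarrow>
           gdist G y z \<noteq> gdist G y x + gdist G x z \<and> gdist G x z \<noteq> gdist G x y + gdist G y z"
  shows "x \<in> S \<or> y \<in> S"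
proof -
  obtain z where "z \<in> S" and "gdist G y z = gdist G y x + gdist G x z \<or>
                                gdist G x z = gdist G x y + gdist G y z"
    using assms(1-4) unfolding strong_resolving_def by blast
  moreover have "z \<in> verts G" using assms(1) \<open>z \<in> S\<close> by (auto simp: strong_resolving_def)
  ultimately show ?thesis using assms(2-5) assms(5)[of z] by blast
qed

lemma card_le_card_Diff_image:
  assumes "finite V" "S \<subseteq> V" "inj_on f (V - S)" "f ` (V - S) \<subseteq> B" "finite B"
  shows "card V \<le> card S + card B"
proof -
  have "card V = card S + card (V - S)"
    using assms(1,2) by (metis card_Diff_subset finite_subset card_mono le_add_diff_inverse)
  also have "card (V - S) \<le> card B"
    using card_inj_on_le[OF assms(3,4,5)] .
  finally show ?thesis by simp
qed

lemma exists_less_avoiding: "3 \<le> (N :: nat) \<Longrightarrow> \<exists>x<N. x \<noteq> a \<and> x \<noteq> b"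
  by presburger

lemma verts_modprod: "verts (modprod G H) = verts G \<times> verts H"
  by (simp add: modprod_def verts_def)

lemma mem_verts_KM: "(b, i, k) \<in> verts (KM n q r) \<longleftrightarrow> i < n \<and> k < (if b then r i else q i)"
  by (simp add: verts_def KM_def)

lemma adj_KM:
  "adj (KM n q r) (b, i, k) (b', i', k') \<longleftrightarrow> (b, i, k) \<noteq> (b', i', k') \<and> ((b = b') = (i = i'))"
  by (auto simp: adj_def KM_def)

lemma adj_modprod_KM:
  "adj (modprod (KM n q r) (KM m s p)) ((b, i, k), (c, j, l)) ((b', i', k'), (c', j', l')) \<longleftrightarrow>
     ((b, i, k), (c, j, l)) \<noteq> ((b', i', k'), (c', j', l')) \<and>
     (((b = b') = (i = i')) = ((c = c') = (j = j')))"
  unfolding modprod_def adj_def[of "(_, _)"] using adj_KM[of n q r] adj_KM[of m s p]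
  by (auto simp: adj_def)

lemma finite_verts_KM: "finite (verts (KM n q r))"
  and card_verts_KM: "card (verts (KM n q r)) = (\<Sum>i<n. q i + r i)"
proof -
  define B where "B i = ({False} \<times> {..<q i}) \<union> ({True} \<times> {..<r i})" for i
  have verts_eq: "verts (KM n q r) = (\<lambda>(i, b, k). (b, i, k)) ` (SIGMA i:{..<n}. B i)"
    unfolding B_def by (force simp: verts_def KM_def split: if_splits)
  have inj: "inj_on (\<lambda>(i, b, k). (b :: bool, i :: nat, k :: nat)) (SIGMA i:{..<n}. B i)"
    by (auto simp: inj_on_def)
  have finite_B: "finite (B i)" for i
    unfolding B_def by simp
  have card_B: "card (B i) = q i + r i" for i
    unfolding B_def by (subst card_Un_disjoint) (auto simp: card_cartesian_product_singleton)
  show "finite (verts (KM n q r))" and "card (verts (KM n q r)) = (\<Sum>i<n. q i + r i)"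
    unfolding verts_eq by (simp_all add: card_image[OF inj] card_SigmaI finite_B card_B)
qed

type_synonym KM_vertex = "(bool \<times> nat \<times> nat) \<times> (bool \<times> nat \<times> nat)"

definition block :: "KM_vertex \<Rightarrow> nat \<times> nat" where
  "block = (\<lambda>((b, i, k), (c, j, l)). (i, j))"

definition antipodal :: "KM_vertex \<Rightarrow> KM_vertex \<Rightarrow> bool" where
  "antipodal = (\<lambda>((b, i, k), (c, j, l)) ((b', i', k'), (c', j', l')).
     i = i' \<and> j = j' \<and> (b = b') \<noteq> (c = c'))"

locale KM_modprod =
  fixes n m :: nat and q r s p :: "nat \<Rightarrow> nat"
  assumes n_ge_3: "n \<ge> 3" and m_ge_3: "m \<ge> 3"
    and qr_pos: "\<forall>i<n. q i \<ge> 1 \<and> r i \<ge> 1"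
    and sp_pos: "\<forall>j<m. s j \<ge> 1 \<and> p j \<ge> 1"
begin

abbreviation "P \<equiv> modprod (KM n q r) (KM m s p)"
abbreviation "V \<equiv> verts P"

lemmas adj_P = adj_modprod_KM[of n q r m s p]

lemma mem_V:
  "((b, i, k), (c, j, l)) \<in> V \<longleftrightarrow>
     i < n \<and> k < (if b then r i else q i) \<and> j < m \<and> l < (if c then p j else s j)"
  by (simp add: verts_modprod mem_verts_KM)

lemma mem_V_0: "((b, i, 0), (c, j, 0)) \<in> V \<longleftrightarrow> i < n \<and> j < m"
  using qr_pos sp_pos by (auto simp: mem_V)

lemma common_neighbour:
  assumes u: "u \<in> V" and v: "v \<in> V" and "\<not> antipodal u v"
  shows "\<exists>w\<in>V. adj P u w \<and> adj P w v"
proof -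
  obtain b i k c j l b' i' k' c' j' l'
    where uv: "u = ((b, i, k), (c, j, l))" "v = ((b', i', k'), (c', j', l'))"
    by (metis prod.exhaust)
  have "i < n" "j < m" "j' < m" using u v uv by (auto simp: mem_V)
  obtain i'' where i'': "i'' < n" "i'' \<noteq> i" "i'' \<noteq> i'" using exists_less_avoiding n_ge_3 by blast
  obtain j'' where j'': "j'' < m" "j'' \<noteq> j" "j'' \<noteq> j'" using exists_less_avoiding m_ge_3 by blast
  let ?w1 = "((b, i'', 0), (c, j'', 0))" and ?w2 = "((b, i'', 0), (c, j', 0))"
    and ?w3 = "((b, i, 0), (\<not> c, j'', 0))"
  have "(adj P u ?w1 \<and> adj P ?w1 v) \<or> (adj P u ?w2 \<and> adj P ?w2 v) \<or> (adj P u ?w3 \<and> adj P ?w3 v)"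
    using i'' j'' \<open>\<not> antipodal u v\<close> unfolding uv
    by (cases b; cases b'; cases c; cases c'; auto simp: adj_P antipodal_def)
  moreover have "?w1 \<in> V" "?w2 \<in> V" "?w3 \<in> V"
    using \<open>i < n\<close> \<open>j < m\<close> \<open>j' < m\<close> i'' j'' by (auto simp: mem_V_0)
  ultimately show ?thesis by blast
qed

lemma adj_other_block:
  assumes "u \<in> V"
  shows "\<exists>w\<in>V. adj P u w \<and> block w \<noteq> block u"
proof -
  obtain b i k c j l where u: "u = ((b, i, k), (c, j, l))" by (metis prod.exhaust)
  have "i < n" "j < m" using assms u by (auto simp: mem_V)
  moreover obtain i' where "i' < n" "i' \<noteq> i" using exists_less_avoiding[OF n_ge_3, of i i] by blast
  moreover obtain j' where "j' < m" "j' \<noteq> j" using exists_less_avoiding[OF m_ge_3, of j j] by blast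
  ultimately show ?thesis
    by (intro bexI[of _ "((b, i', 0), (c, j', 0))"]) (auto simp: u adj_P block_def mem_V_0)
qed

lemma antipodal_sym: "antipodal u v \<Longrightarrow> antipodal v u"
  by (auto simp: antipodal_def split: prod.splits)

lemma antipodal_not_adj: "antipodal u v \<Longrightarrow> \<not> adj P u v"
  by (cases u; cases v) (auto simp: adj_P antipodal_def)

lemma antipodal_no_common_neighbour: "antipodal u v \<Longrightarrow> \<not> (adj P u w \<and> adj P w v)"
  by (cases u; cases v; cases w) (auto simp: adj_P antipodal_def)

lemma antipodal_same_block: "antipodal u v \<Longrightarrow> block u = block v"
  by (auto simp: antipodal_def block_def split: prod.splits)

lemma gdist_P:
  assumes u: "u \<in> V" and v: "v \<in> V"
  shows "gdist P u v = (if u = v then 0 else if adj P u v then 1 else if antipodal u v then 3 else 2)"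
proof -
  consider "u = v" | "u \<noteq> v" "adj P u v" | "u \<noteq> v" "antipodal u v"
    | "u \<noteq> v" "\<not> adj P u v" "\<not> antipodal u v" by blast
  then show ?thesis
  proof cases
    case 1
    then show ?thesis using gdist_self u by simp
  next
    case 2
    then show ?thesis using gdist_eq_1 u v by simp
  next
    case 3
    obtain w where w: "w \<in> V" "adj P u w" "block w \<noteq> block u" using adj_other_block u by blast
    then have "\<not> antipodal w v"
      using antipodal_same_block[of u v] antipodal_same_block[of w v] 3 by auto
    then obtain w' where "w' \<in> V" "adj P w w'" "adj P w' v" using common_neighbour w(1) v by blast
    then have "gdist P u v = 3"
      using 3 u v w antipodal_not_adj antipodal_no_common_neighbour by (intro gdist_eq_3) auto
    then show ?thesis using 3 antipodal_not_adj by simp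
  next
    case 4
    then obtain w where "w \<in> V" "adj P u w" "adj P w v" using common_neighbour u v by blast
    then show ?thesis using 4 u v by (simp add: gdist_eq_2)
  qed
qed


lemma same_block_adj:
  "block x = block y \<Longrightarrow> \<not> antipodal x y \<Longrightarrow> x \<noteq> y \<Longrightarrow> adj P y x"
  by (cases x; cases y) (auto simp: adj_P antipodal_def block_def)

lemma same_block_adj_iff:
  "block x = block y \<Longrightarrow> \<not> antipodal x y \<Longrightarrow> z \<noteq> x \<Longrightarrow> z \<noteq> y \<Longrightarrow> adj P y z \<longleftrightarrow> adj P x z"
  by (cases x; cases y; cases z) (auto simp: adj_P antipodal_def block_def)

lemma same_block_antipodal_iff:
  "block x = block y \<Longrightarrow> \<not> antipodal x y \<Longrightarrow> antipodal y z \<longleftrightarrow> antipodal x z"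
  by (cases x; cases y; cases z) (auto simp: antipodal_def block_def)

lemma gdist_P_le_3: "u \<in> V \<Longrightarrow> v \<in> V \<Longrightarrow> gdist P u v \<le> 3"
  by (simp add: gdist_P numeral_eq_enat one_enat_def)

lemma gdist_P_ge_1: "u \<in> V \<Longrightarrow> v \<in> V \<Longrightarrow> u \<noteq> v \<Longrightarrow> 1 \<le> gdist P u v"
  by (simp add: gdist_P numeral_eq_enat one_enat_def)

lemma same_block_not_between:
  assumes x: "x \<in> V" and y: "y \<in> V" and z: "z \<in> V" and "x \<noteq> y" "z \<noteq> x" "z \<noteq> y"
    and "block x = block y"
  shows "gdist P y z \<noteq> gdist P y x + gdist P x z"
proof (cases "antipodal x y")
  case True
  then have "antipodal y x" "\<not> adj P y x" using antipodal_sym antipodal_not_adj by blast+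
  then have "gdist P y x = 3" using gdist_P[OF y x] \<open>x \<noteq> y\<close> by simp
  moreover have "gdist P y z \<le> 3" "1 \<le> gdist P x z"
    using gdist_P_le_3 gdist_P_ge_1 assms by auto
  ultimately show ?thesis
    by (cases "gdist P y z"; cases "gdist P x z") (auto simp: numeral_eq_enat one_enat_def)
next
  case False
  have "adj P y x" "adj P y z \<longleftrightarrow> adj P x z" "antipodal y z \<longleftrightarrow> antipodal x z"
    using same_block_adj same_block_adj_iff same_block_antipodal_iff False assms by blast+
  then have "gdist P y x = 1" and "gdist P y z = gdist P x z"
    using gdist_P[OF y x] gdist_P[OF y z] gdist_P[OF x z] assms by simp_all
  moreover have "gdist P x z \<le> 3" using gdist_P_le_3 x z by blast
  ultimately show ?thesis
    by (cases "gdist P x z") (auto simp: numeral_eq_enat one_enat_def)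
qed

lemma finite_V: "finite V"
  by (simp add: verts_modprod finite_verts_KM)

lemma card_V: "card V = (\<Sum>i<n. q i + r i) * (\<Sum>j<m. s j + p j)"
  by (simp add: verts_modprod card_cartesian_product card_verts_KM)

lemma card_V_le_card_strong_resolving:
  assumes "strong_resolving P S"
  shows "card V \<le> card S + n * m"
proof -
  have S: "S \<subseteq> V" using assms by (simp add: strong_resolving_def)
  have "inj_on block (V - S)"
  proof (rule inj_onI, rule ccontr)
    fix x y assume "x \<in> V - S" "y \<in> V - S" "block x = block y" "x \<noteq> y"
    then show False
      using strong_resolving_mem_or_mem[OF assms] same_block_not_between by (metis DiffE)
  qed
  moreover have "block ` (V - S) \<subseteq> {..<n} \<times> {..<m}"
    by (auto simp: block_def mem_V)
  ultimately show ?thesis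
    using card_le_card_Diff_image[OF finite_V S, of block "{..<n} \<times> {..<m}"]
    by (simp add: card_cartesian_product)
qed

definition representatives :: "KM_vertex set" where
  "representatives = (\<lambda>(i, j). ((False, i, 0), (False, j, 0))) ` ({..<n} \<times> {..<m})"

lemma card_representatives: "card representatives = n * m"
proof -
  have "inj_on (\<lambda>(i, j). ((False, i, 0 :: nat), (False, j, 0 :: nat))) ({..<n} \<times> {..<m})"
    by (auto simp: inj_on_def)
  then show ?thesis unfolding representatives_def by (simp add: card_image card_cartesian_product)
qed

lemma representatives_subset: "representatives \<subseteq> V"
  unfolding representatives_def using mem_V_0 by auto

lemma representative_on_geodesic_to_antipode:
  assumes "x \<in> representatives" "x \<noteq> ((False, i, 0), (False, j, 0))" "i < n" "j < m"
  shows "gdist P ((False, i, 0), (False, j, 0)) ((True, i, 0), (False, j, 0)) =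
           gdist P ((False, i, 0), (False, j, 0)) x + gdist P x ((True, i, 0), (False, j, 0))"
proof -
  obtain i' j' where x: "x = ((False, i', 0), (False, j', 0))" "i' < n" "j' < m"
    using assms(1) unfolding representatives_def by auto
  show ?thesis
    using assms(2-4) x
    by (auto simp: gdist_P mem_V_0 adj_P antipodal_def numeral_eq_enat one_enat_def)
qed

lemma strong_resolving_Diff_representatives: "strong_resolving P (V - representatives)"
  unfolding strong_resolving_def
proof (intro conjI ballI impI)
  fix x y assume x: "x \<in> V" and y: "y \<in> V" and "x \<noteq> y"
  show "\<exists>z\<in>V - representatives.
          gdist P y z = gdist P y x + gdist P x z \<or> gdist P x z = gdist P x y + gdist P y z"
  proof (cases "x \<in> representatives \<and> y \<in> representatives")
    case True
    then obtain i j where "y = ((False, i, 0), (False, j, 0))" "i < n" "j < m"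
      unfolding representatives_def by auto
    then show ?thesis
      using True representative_on_geodesic_to_antipode[of x i j] \<open>x \<noteq> y\<close> mem_V_0
      by (intro bexI[of _ "((True, i, 0), (False, j, 0))"]) (auto simp: representatives_def)
  next
    case False
    \<comment> \<open>a non-representative among x and y strongly resolves the pair itself\<close>
    then show ?thesis using x y gdist_self by (metis DiffI add.right_neutral add_0)
  qed
qed auto

lemma sdim_P: "sdim P = card V - n * m"
  unfolding sdim_def
proof (rule Least_equality)
  show "\<exists>S. strong_resolving P S \<and> card S = card V - n * m"
    using strong_resolving_Diff_representatives card_representatives representatives_subset finite_V
    by (metis card_Diff_subset finite_subset)
  show "card V - n * m \<le> k" if "\<exists>S. strong_resolving P S \<and> card S = k" for k
    using that card_V_le_card_strong_resolving by fastforce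
qed

end

theorem mainTheorem13:
  fixes n m :: nat and q r s p :: "nat \<Rightarrow> nat"
  assumes "n \<ge> 3" and "m \<ge> 3"
    and "\<forall>i<n. q i \<ge> 1 \<and> r i \<ge> 1"
    and "\<forall>j<m. s j \<ge> 1 \<and> p j \<ge> 1"
  shows "int (sdim (modprod (KM n q r) (KM m s p))) =
           int (\<Sum>i<n. (q i + r i) * (\<Sum>j<m. s j + p j)) - int (n * m)"
proof -
  interpret KM_modprod n m q r s p using assms by unfold_locales
  have "n * m \<le> card V"
    using card_mono[OF finite_V representatives_subset] card_representatives by simp
  moreover have "(\<Sum>i<n. (q i + r i) * (\<Sum>j<m. s j + p j)) = card V"
    by (simp add: card_V sum_distrib_right)
  ultimately show ?thesis by (simp add: sdim_P of_nat_diff)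
qed

end
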